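(* Let $(K,\delta)$ be a differential field of characteristic zero. Then $(K,\delta)$ is regular if and only if every constant of $K$ (every $c\in K$ with $\delta(c)=0$) is stable in $(K,\delta)$. Moreover, if $(K,\delta)$ is regular, then an element $f\in K$ is stable in $(K,\delta)$ if and only if $\delta(f)$ is stable in $(K,\delta)$.
   Context: A differential field $(K,\delta)$ is a field with an additive map $\delta$ satisfying $\delta(fg)=f\delta(g)+g\delta(f)$. It is regular if there exists $x\in K$ with $\delta(x)=1$. An element $f\in K$ is stable in $(K,\delta)$ if there is a sequence $(a_i)_{i\ge0}$ in $K$ with $a_0=f$ and $\delta(a_{i+1})=a_i$ for all $i\in\mathbb{N}$. *)

theory Defs
  imports Main
begin

definition derivation :: "('a::field \<Rightarrow> 'a) \<Rightarrow> bool" where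
  "derivation d \<longleftrightarrow> (\<forall>f g. d (f + g) = d f + d g) \<and> (\<forall>f g. d (f * g) = f * d g + g * d f)"

definition regular_dfield :: "('a::field \<Rightarrow> 'a) \<Rightarrow> bool" where
  "regular_dfield d \<longleftrightarrow> (\<exists>x. d x = 1)"

definition stable :: "('a::field \<Rightarrow> 'a) \<Rightarrow> 'a \<Rightarrow> bool" where
  "stable d f \<longleftrightarrow> (\<exists>a :: nat \<Rightarrow> 'a. a 0 = f \<and> (\<forall>i. d (a (Suc i)) = a i))"

end

theory Submission
  imports Defs
begin

text \<open>If \<open>\<delta> x = 1\<close>, every constant \<open>c\<close> has the stable sequence of iterated antiderivatives
  \<open>c x\<^sup>i / i!\<close>. Conversely, the constant \<open>1\<close> being stable gives an antiderivative of \<open>1\<close>.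
  For the second part, a stable \<open>\<delta> f\<close> has a stable antiderivative \<open>g\<close>, and then
  \<open>f = g + (f - g)\<close> is a sum of two stable elements since \<open>f - g\<close> is a constant.\<close>

lemma stable_iff_stable_antiderivative:
  "stable d f \<longleftrightarrow> (\<exists>g. d g = f \<and> stable d g)"
proof
  assume "stable d f"
  then obtain a where "a 0 = f" "\<And>i. d (a (Suc i)) = a i"
    unfolding stable_def by blast
  then show "\<exists>g. d g = f \<and> stable d g"
    unfolding stable_def by (intro exI[of _ "a 1"] conjI exI[of _ "\<lambda>i. a (Suc i)"]) auto
next
  assume "\<exists>g. d g = f \<and> stable d g"
  then obtain g b where "d g = f" "b 0 = g" "\<And>i. d (b (Suc i)) = b i"
    unfolding stable_def by blast
  then show "stable d f"
    unfolding stable_def by (intro exI[of _ "case_nat f b"]) (auto split: nat.split)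
qed

lemma stable_imp_stable_image: "stable d f \<Longrightarrow> stable d (d f)"
  using stable_iff_stable_antiderivative by blast

context
  fixes d :: "'a::field \<Rightarrow> 'a"
  assumes der: "derivation d"
begin

lemma derivation_add: "d (x + y) = d x + d y"
  using der by (simp add: derivation_def)

lemma derivation_mult: "d (x * y) = x * d y + y * d x"
  using der by (simp add: derivation_def)

lemma derivation_zero: "d 0 = 0"
  using derivation_add[of 0 0] by (metis add_cancel_right_right add_0)

lemma derivation_one: "d 1 = 0"
  using derivation_mult[of 1 1] by (metis add_cancel_right_right mult_1)

lemma derivation_diff: "d (x - y) = d x - d y"
  using derivation_add[of "x - y" y] by (simp add: algebra_simps)

lemma derivation_of_nat: "d (of_nat n) = 0"
  by (induction n) (simp_all add: derivation_zero derivation_add derivation_one)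

lemma derivation_mult_const: "d c = 0 \<Longrightarrow> d (c * y) = c * d y"
  by (simp add: derivation_mult)

lemma derivation_divide_const:
  assumes "d c = 0"
  shows "d (y / c) = d y / c"
proof (cases "c = 0")
  case True
  then show ?thesis by (simp add: derivation_zero)
next
  case False
  have "d y = d (y / c * c)"
    using False by simp
  also have "\<dots> = c * d (y / c)"
    using assms derivation_mult[of "y / c" c] by simp
  finally show ?thesis
    using False by (simp add: field_simps)
qed

lemma derivation_power: "d (x ^ Suc n) = of_nat (Suc n) * x ^ n * d x"
proof (induction n)
  case 0
  then show ?case by simp
next
  case (Suc n)
  have "d (x ^ Suc (Suc n)) = x * d (x ^ Suc n) + x ^ Suc n * d x"
    using derivation_mult[of x "x ^ Suc n"] by simp
  also have "\<dots> = of_nat (Suc (Suc n)) * x ^ Suc n * d x"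
    using Suc by (simp add: algebra_simps)
  finally show ?case .
qed

lemma stable_add: "stable d f \<Longrightarrow> stable d g \<Longrightarrow> stable d (f + g)"
  unfolding stable_def
proof (elim exE conjE)
  fix a b :: "nat \<Rightarrow> 'a"
  assume "a 0 = f" "\<forall>i. d (a (Suc i)) = a i" "b 0 = g" "\<forall>i. d (b (Suc i)) = b i"
  then show "\<exists>s. s 0 = f + g \<and> (\<forall>i. d (s (Suc i)) = s i)"
    by (intro exI[of _ "\<lambda>i. a i + b i"]) (simp add: derivation_add)
qed

end

context
  fixes d :: "'a::field_char_0 \<Rightarrow> 'a"
  assumes der: "derivation d"
begin

lemma derivation_power_divide_fact:
  "d (x ^ Suc i / fact (Suc i)) = x ^ i / fact i * d x"
proof -
  have "d (fact (Suc i) :: 'a) = 0"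
    using derivation_of_nat[OF der] by (metis of_nat_fact)
  then have "d (x ^ Suc i / fact (Suc i)) = of_nat (Suc i) * x ^ i * d x / fact (Suc i)"
    by (simp only: derivation_divide_const[OF der] derivation_power[OF der])
  also have "\<dots> = x ^ i / fact i * d x"
    by (simp add: fact_Suc del: of_nat_Suc)
  finally show ?thesis .
qed

lemma constant_stable_if_regular:
  assumes x: "d x = 1" and c: "d c = 0"
  shows "stable d c"
  unfolding stable_def
proof (intro exI conjI allI)
  show "c * (x ^ 0 / fact 0) = c" by simp
  fix i
  show "d (c * (x ^ Suc i / fact (Suc i))) = c * (x ^ i / fact i)"
    using c x by (simp only: derivation_mult_const[OF der] derivation_power_divide_fact mult_1_right)
qed

lemma stable_if_stable_image:
  assumes x: "d x = 1" and "stable d (d f)"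
  shows "stable d f"
proof -
  obtain g where g: "d g = d f" "stable d g"
    using assms(2) stable_iff_stable_antiderivative by blast
  have "stable d (f - g)"
    using der x g(1) by (intro constant_stable_if_regular) (simp_all add: derivation_diff)
  then have "stable d (g + (f - g))"
    using der g(2) by (intro stable_add)
  then show ?thesis by simp
qed

end

theorem proposition2p8:
  fixes \<delta> :: "'a::field_char_0 \<Rightarrow> 'a"
  assumes "derivation \<delta>"
  shows "(regular_dfield \<delta> \<longleftrightarrow> (\<forall>c. \<delta> c = 0 \<longrightarrow> stable \<delta> c))
    \<and> (regular_dfield \<delta> \<longrightarrow> (\<forall>f. stable \<delta> f \<longleftrightarrow> stable \<delta> (\<delta> f)))"
proof -
  have "regular_dfield \<delta>" if "\<forall>c. \<delta> c = 0 \<longrightarrow> stable \<delta> c"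
  proof -
    have "stable \<delta> 1"
      using that derivation_one[OF assms] by blast
    then show ?thesis
      unfolding regular_dfield_def using stable_iff_stable_antiderivative by blast
  qed
  then show ?thesis
    using constant_stable_if_regular[OF assms] stable_if_stable_image[OF assms]
      stable_imp_stable_image
    unfolding regular_dfield_def by blast
qed

end
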